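(* For all $u\in C_c^\infty(0,\infty)$, $$\int_0^\infty\frac{u'(r)^2}{\sinh^2r}dr\ge\frac94\int_0^\infty\frac{u(r)^2}{\sinh^4r}dr+\int_0^\infty\frac{u(r)^2}{\sinh^2r}dr.$$ *)

theory Defs
  imports "HOL-Analysis.Analysis"
begin

definition smooth_on :: "real set \<Rightarrow> (real \<Rightarrow> real) \<Rightarrow> bool" where
  "smooth_on S u \<longleftrightarrow> (\<forall>k. ((deriv ^^ k) u) differentiable_on S)"

definition Cc_infty_pos :: "(real \<Rightarrow> real) \<Rightarrow> bool" where
  "Cc_infty_pos u \<longleftrightarrow> smooth_on {0<..} u \<and>
     (\<exists>a b. 0 < a \<and> a \<le> b \<and> (\<forall>x. x \<notin> {a..b} \<longrightarrow> u x = 0))"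

end

theory Submission
  imports Defs
begin

text \<open>Write \<open>S = sinh r\<close>, \<open>C = cosh r\<close> and \<open>w = (3/2) C/S - (1/2) S/C\<close>. Completing the square,
  \<open>u'\<^sup>2/S\<^sup>2 - (9/4) u\<^sup>2/S\<^sup>4 - u\<^sup>2/S\<^sup>2 = (u' - w u)\<^sup>2/S\<^sup>2 + (3/4)(1/S\<^sup>2 - 1/C\<^sup>2) u\<^sup>2 + (h u\<^sup>2)'\<close>
  with \<open>h = w/S\<^sup>2\<close>. The first two terms on the right are nonnegative, and the exact derivative
  integrates to zero because \<open>u\<close> has compact support in \<open>(0,\<infinity>)\<close>.\<close>

definition hardy_weight :: "real \<Rightarrow> real" where
  "hardy_weight r = 3/2 * cosh r / sinh r ^ 3 - 1/2 / (sinh r * cosh r)"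

definition hardy_weight_deriv :: "real \<Rightarrow> real" where
  "hardy_weight_deriv r = 3/2 * (sinh r ^ 2 - 3 * cosh r ^ 2) / sinh r ^ 4
     + 1/2 * (cosh r ^ 2 + sinh r ^ 2) / (sinh r ^ 2 * cosh r ^ 2)"

lemma hardy_weight_has_derivative:
  assumes "0 < r"
  shows "(hardy_weight has_real_derivative hardy_weight_deriv r) (at r)"
proof -
  have "sinh r > 0" "cosh r > 0" using assms by simp_all
  then show ?thesis
    unfolding hardy_weight_def hardy_weight_deriv_def
    apply -
    apply (rule derivative_eq_intros refl | simp)+
    apply (simp add: field_simps power2_eq_square)
    by algebra
qed

lemma hyperbolic_square_completion:
  fixes S C u v :: real
  assumes "S > 0" "C > 0" "C^2 = 1 + S^2"
  shows "v^2/S^2 - 9/4 * u^2/S^4 - u^2/S^2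
           - ((3/2 * (S^2 - 3 * C^2)/S^4 + 1/2 * (C^2 + S^2)/(S^2 * C^2)) * u^2
              + 2 * (3/2 * C/S^3 - 1/2/(S * C)) * u * v)
         = (v - (3/2 * C/S - 1/2 * S/C) * u)^2/S^2 + 3/4 * (1/S^2 - 1/C^2) * u^2"
proof -
  have "S \<noteq> 0" "C \<noteq> 0" using assms(1,2) by auto
  then show ?thesis
    apply (simp add: field_simps)
    apply (simp add: power2_eq_square power4_eq_xxxx algebra_simps)
    using assms(3) unfolding power2_eq_square by algebra
qed

lemma hardy_integrand_nonneg:
  fixes u v :: real
  assumes "0 < r"
  shows "0 \<le> v^2/sinh r^2 - 9/4 * u^2/sinh r^4 - u^2/sinh r^2
               - (hardy_weight_deriv r * u^2 + 2 * hardy_weight r * u * v)"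
proof -
  define S C where "S = sinh r" and "C = cosh r"
  have pos: "S > 0" "C > 0" and pyth: "C^2 = 1 + S^2"
    using assms by (simp_all add: S_def C_def cosh_square_eq)
  have "1/C^2 \<le> 1/S^2"
    using pos pyth by (intro divide_left_mono) (auto intro!: mult_pos_pos add_pos_nonneg)
  then have "0 \<le> (v - (3/2 * C/S - 1/2 * S/C) * u)^2/S^2 + 3/4 * (1/S^2 - 1/C^2) * u^2"
    by (intro add_nonneg_nonneg) auto
  then show ?thesis
    using hyperbolic_square_completion[OF pos pyth, of v u]
    by (simp add: S_def C_def hardy_weight_def hardy_weight_deriv_def)
qed

lemma has_integral_weighted_square_derivative:
  fixes g g' u u' :: "real \<Rightarrow> real"
  assumes "A \<le> B"
    and "\<And>r. r \<in> {A..B} \<Longrightarrow> (g has_real_derivative g' r) (at r)"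
    and "\<And>r. r \<in> {A..B} \<Longrightarrow> (u has_real_derivative u' r) (at r)"
  shows "((\<lambda>r. g' r * u r ^ 2 + 2 * g r * u r * u' r) has_integral g B * u B ^ 2 - g A * u A ^ 2) {A..B}"
proof (rule fundamental_theorem_of_calculus[OF assms(1)])
  fix r assume r: "r \<in> {A..B}"
  have "((\<lambda>r. g r * u r ^ 2) has_real_derivative g' r * u r ^ 2 + 2 * g r * u r * u' r) (at r)"
    using DERIV_mult[OF assms(2)[OF r] DERIV_power[OF assms(3)[OF r], of 2]]
    by (simp add: algebra_simps)
  then show "((\<lambda>r. g r * u r ^ 2) has_vector_derivative g' r * u r ^ 2 + 2 * g r * u r * u' r)
               (at r within {A..B})"
    by (simp add: has_real_derivative_iff_has_vector_derivative[symmetric] has_field_derivative_at_within)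
qed

lemma hardy_inequality_interval:
  fixes u u' :: "real \<Rightarrow> real"
  assumes "0 < A" "A \<le> B" "u A = 0" "u B = 0"
    and du: "\<And>r. r \<in> {A..B} \<Longrightarrow> (u has_real_derivative u' r) (at r)"
    and cont_u': "continuous_on {A..B} u'"
  shows "9/4 * integral {A..B} (\<lambda>r. u r ^ 2 / sinh r ^ 4) + integral {A..B} (\<lambda>r. u r ^ 2 / sinh r ^ 2)
           \<le> integral {A..B} (\<lambda>r. u' r ^ 2 / sinh r ^ 2)"
proof -
  have pos: "0 < r" if "r \<in> {A..B}" for r using that assms(1) by auto
  have cont_u: "continuous_on {A..B} u"
    using du by (intro continuous_at_imp_continuous_on) (metis DERIV_isCont)
  have sinh_nz: "sinh r \<noteq> 0" if "r \<in> {A..B}" for r using pos[OF that] by simp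
  have int_u': "((\<lambda>r. u' r ^ 2 / sinh r ^ 2) has_integral integral {A..B} (\<lambda>r. u' r ^ 2 / sinh r ^ 2)) {A..B}"
    and int_u4: "((\<lambda>r. u r ^ 2 / sinh r ^ 4) has_integral integral {A..B} (\<lambda>r. u r ^ 2 / sinh r ^ 4)) {A..B}"
    and int_u2: "((\<lambda>r. u r ^ 2 / sinh r ^ 2) has_integral integral {A..B} (\<lambda>r. u r ^ 2 / sinh r ^ 2)) {A..B}"
    using sinh_nz by (auto intro!: integrable_integral integrable_continuous_interval
                             continuous_intros cont_u cont_u')
  have exact: "((\<lambda>r. hardy_weight_deriv r * u r ^ 2 + 2 * hardy_weight r * u r * u' r) has_integral 0) {A..B}"
    using has_integral_weighted_square_derivative[OF assms(2) hardy_weight_has_derivative du] pos assms(3,4)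
    by simp
  have "0 \<le> integral {A..B} (\<lambda>r. u' r ^ 2 / sinh r ^ 2) - 9/4 * integral {A..B} (\<lambda>r. u r ^ 2 / sinh r ^ 4)
              - integral {A..B} (\<lambda>r. u r ^ 2 / sinh r ^ 2) - 0"
    using has_integral_diff[OF has_integral_diff[OF has_integral_diff[OF int_u'
            has_integral_mult_right[OF int_u4, of "9/4"]] int_u2] exact]
  proof (rule has_integral_nonneg)
    fix r assume "r \<in> {A..B}"
    from hardy_integrand_nonneg[OF pos[OF this], of "u' r" "u r"]
    show "0 \<le> u' r ^ 2 / sinh r ^ 2 - 9/4 * (u r ^ 2 / sinh r ^ 4) - u r ^ 2 / sinh r ^ 2
               - (hardy_weight_deriv r * u r ^ 2 + 2 * hardy_weight r * u r * u' r)"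
      by simp
  qed
  then show ?thesis by simp
qed

lemma deriv_zero_outside_closed:
  fixes f :: "real \<Rightarrow> real"
  assumes "closed K" "\<And>x. x \<notin> K \<Longrightarrow> f x = 0" "x \<notin> K"
  shows "deriv f x = 0"
proof -
  have "eventually (\<lambda>y. y \<in> - K) (nhds x)"
    using assms(1,3) by (intro eventually_nhds_in_open) auto
  then have "eventually (\<lambda>y. f y = 0) (nhds x)"
    by eventually_elim (use assms(2) in auto)
  then have "deriv f x = deriv (\<lambda>_. 0) x" by (rule deriv_cong_ev) simp
  then show ?thesis by simp
qed

lemma Cc_infty_pos_support:
  assumes "Cc_infty_pos u"
  obtains A B where "0 < A" "A \<le> B"
    and "\<And>x. x \<notin> {A<..<B} \<Longrightarrow> u x = 0" "\<And>x. x \<notin> {A<..<B} \<Longrightarrow> deriv u x = 0"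
proof -
  obtain a b where ab: "0 < a" "a \<le> b" and u0: "\<And>x. x \<notin> {a..b} \<Longrightarrow> u x = 0"
    using assms unfolding Cc_infty_pos_def by blast
  have "deriv u x = 0" if "x \<notin> {a..b}" for x
    using deriv_zero_outside_closed[OF closed_atLeastAtMost u0 that] .
  with ab u0 show ?thesis
    by (intro that[of "a/2" "b + 1"]) auto
qed

lemma smooth_on_open_C1:
  assumes "smooth_on S u" "open S"
  shows "\<And>x. x \<in> S \<Longrightarrow> (u has_real_derivative deriv u x) (at x)"
    and "continuous_on S (deriv u)"
proof -
  have "(deriv ^^ 0) u differentiable_on S" "(deriv ^^ 1) u differentiable_on S"
    using assms(1) unfolding smooth_on_def by blast+
  then have "u differentiable_on S" "deriv u differentiable_on S" by simp_all
  then show "\<And>x. x \<in> S \<Longrightarrow> (u has_real_derivative deriv u x) (at x)"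
    and "continuous_on S (deriv u)"
    using assms(2) by (auto simp: differentiable_on_eq_differentiable_at DERIV_deriv_iff_real_differentiable
                             intro: differentiable_imp_continuous_on)
qed

lemma integral_eq_integral_interval_support:
  fixes f :: "real \<Rightarrow> real"
  assumes "continuous_on {A..B} f" "\<And>x. x \<notin> {A..B} \<Longrightarrow> f x = 0" "{A..B} \<subseteq> S"
  shows "integral S f = integral {A..B} f"
  using has_integral_on_superset[OF integrable_integral[OF integrable_continuous_interval[OF assms(1)]]
          assms(2) assms(3)]
  by (rule integral_unique)

theorem lemma6p1:
  fixes u :: "real \<Rightarrow> real"
  assumes "Cc_infty_pos u"
  shows "integral {0<..} (\<lambda>r. (deriv u r)^2 / (sinh r)^2)
           \<ge> 9/4 * integral {0<..} (\<lambda>r. (u r)^2 / (sinh r)^4)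
             + integral {0<..} (\<lambda>r. (u r)^2 / (sinh r)^2)"
proof -
  obtain A B where AB: "0 < A" "A \<le> B"
    and u0: "\<And>x. x \<notin> {A<..<B} \<Longrightarrow> u x = 0" and du0: "\<And>x. x \<notin> {A<..<B} \<Longrightarrow> deriv u x = 0"
    using Cc_infty_pos_support[OF assms] by blast
  have sub: "{A..B} \<subseteq> {0<..}" using AB(1) by auto
  have smooth: "smooth_on {0<..} u" using assms unfolding Cc_infty_pos_def by blast
  have du: "\<And>r. r \<in> {A..B} \<Longrightarrow> (u has_real_derivative deriv u r) (at r)"
    using smooth_on_open_C1(1)[OF smooth open_greaterThan] sub by blast
  have cont_u': "continuous_on {A..B} (deriv u)"
    using continuous_on_subset[OF smooth_on_open_C1(2)[OF smooth open_greaterThan] sub] .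
  have cont_u: "continuous_on {A..B} u"
    using du by (intro continuous_at_imp_continuous_on) (metis DERIV_isCont)
  have "integral {0<..} (\<lambda>r. deriv u r ^ 2 / sinh r ^ 2) = integral {A..B} (\<lambda>r. deriv u r ^ 2 / sinh r ^ 2)"
    and "integral {0<..} (\<lambda>r. u r ^ 2 / sinh r ^ 4) = integral {A..B} (\<lambda>r. u r ^ 2 / sinh r ^ 4)"
    and "integral {0<..} (\<lambda>r. u r ^ 2 / sinh r ^ 2) = integral {A..B} (\<lambda>r. u r ^ 2 / sinh r ^ 2)"
    using AB by (auto intro!: integral_eq_integral_interval_support sub continuous_intros cont_u cont_u'
                      simp: u0 du0)
  moreover have "u A = 0" "u B = 0" using u0 by auto
  ultimately show ?thesis
    using hardy_inequality_interval[OF AB _ _ du cont_u'] by simp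
qed

end
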